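(* Let $R$ be a Noetherian ring and let $\mathcal P_0:=\{I\in\mathcal I^\bullet(R)\mid \dim(R/I)=0\}$. Then: (1) $\mathcal P_0$ is dense in $\mathcal I^\bullet(R)$ with respect to the constructible topology; (2) if all residue fields of $R$ are finite, then $\mathcal P_0$ is the smallest dense subset of $\mathcal I^\bullet(R)$ with respect to the constructible topology.
   Context: $\mathcal I(R)$ is the set of ideals of $R$ and $\mathcal I^\bullet(R)$ the set of proper ideals. $\mathcal I(R)$ carries the Zariski topology with basis of open sets $\mathcal B(x_1,\ldots,x_n):=\{I\in\mathcal I(R)\mid x_1,\ldots,x_n\in I\}$; it is a spectral space. The constructible topology is the coarsest topology in which all open quasi-compact subsets of $\mathcal I(R)$ are clopen; $\mathcal I^\bullet(R)$ carries the subspace topology of the constructible topology. *)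

theory Defs
  imports "HOL-Analysis.Analysis" "HOL-Algebra.QuotRing" "HOL-Algebra.Ring_Divisibility"
begin

definition ideals_of :: "('a, 'b) ring_scheme \<Rightarrow> 'a set set" where
  "ideals_of R = {I. ideal I R}"

definition proper_ideals_of :: "('a, 'b) ring_scheme \<Rightarrow> 'a set set" where
  "proper_ideals_of R = {I. ideal I R \<and> I \<noteq> carrier R}"

definition zariski_basic :: "('a, 'b) ring_scheme \<Rightarrow> 'a set \<Rightarrow> 'a set set" where
  "zariski_basic R F = {I \<in> ideals_of R. F \<subseteq> I}"

definition zariski_ideals :: "('a, 'b) ring_scheme \<Rightarrow> 'a set topology" where
  "zariski_ideals R = topology_generated_by
     {zariski_basic R F | F. finite F \<and> F \<subseteq> carrier R}"

definition constructible_ideals :: "('a, 'b) ring_scheme \<Rightarrow> 'a set topology" where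
  "constructible_ideals R = topology_generated_by
     ({U. openin (zariski_ideals R) U \<and> compactin (zariski_ideals R) U} \<union>
      {ideals_of R - U | U. openin (zariski_ideals R) U \<and> compactin (zariski_ideals R) U})"

definition krull_dim :: "('a, 'b) ring_scheme \<Rightarrow> enat" where
  "krull_dim R = Sup {enat n | n. \<exists>P :: nat \<Rightarrow> 'a set.
      (\<forall>i\<le>n. primeideal (P i) R) \<and> (\<forall>i<n. P i \<subset> P (Suc i))}"

end

theory Submission
  imports Defs "HOL-Algebra.Ideal_Product"
begin

(*
  A basic constructible neighbourhood of a proper ideal J consists of the ideals that
  contain a finite set F contained in J and avoid a finite set G disjoint from J. For each g in
  G and for g = 1 take an ideal I_g containing J and maximal among the ideals avoiding g. Every
  prime above I_g equals the colon ideal (I_g : g): the colon ideals (I_g : x^n) stabilise, which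
  makes every x in (I_g : g) nilpotent modulo I_g. Hence dim R/I_g = 0, and the intersection of
  the I_g is a zero-dimensional ideal in the neighbourhood.

  If dim R/I = 0 and all residue fields are finite, then R/I is finite: a maximal
  counterexample I is either prime, hence maximal, or it has elements a, b outside I with ab in I,
  and then I + Ra and (I : a) have finite index, and so has I. So only finitely many ideals
  contain I, and as they are finitely generated, {I} is a finite Boolean combination of compact
  Zariski-open sets, i.e. an isolated point of the constructible topology, which every dense set
  must contain.
*)

locale noetherian_cring = noetherian_ring + cring

lemma (in noetherian_ring) exists_maximal_in_ideal_set:
  assumes "S \<noteq> {}" "S \<subseteq> {I. ideal I R}"
  obtains M where "M \<in> S" "\<And>X. X \<in> S \<Longrightarrow> M \<subseteq> X \<Longrightarrow> X = M"
proof -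
  have "\<exists>M\<in>S. \<forall>X\<in>S. M \<subseteq> X \<longrightarrow> X = M"
  proof (rule subset_Zorn_nonempty[OF assms(1)])
    fix C assume C: "C \<noteq> {}" "subset.chain S C"
    then have "subset.chain {I. ideal I R} C"
      using assms(2) unfolding pred_on.chain_def by auto
    then have "\<Union>C \<in> C" by (rule ideal_chain_is_trivial[OF C(1)])
    then show "\<Union>C \<in> S" using C(2) unfolding pred_on.chain_def by auto
  qed
  then show thesis using that by blast
qed

lemma (in noetherian_ring) exists_maximalideal_above:
  assumes "ideal I R" "I \<noteq> carrier R"
  obtains M where "maximalideal M R" "I \<subseteq> M"
proof -
  let ?S = "{K. ideal K R \<and> I \<subseteq> K \<and> K \<noteq> carrier R}"
  obtain M where M: "M \<in> ?S" and max: "\<And>X. X \<in> ?S \<Longrightarrow> M \<subseteq> X \<Longrightarrow> X = M"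
  proof (rule exists_maximal_in_ideal_set)
    show "?S \<noteq> {}" using assms by blast
  qed auto
  have "maximalideal M R"
  proof (rule maximalidealI)
    show "ideal M R" "carrier R \<noteq> M" using M by auto
    show "J = M \<or> J = carrier R" if "ideal J R" "M \<subseteq> J" "J \<subseteq> carrier R" for J
      using max[of J] that M by blast
  qed
  with M that show thesis by blast
qed

lemma (in primeideal) pow_mem_imp_mem:
  assumes "x \<in> carrier R" "x [^] (n::nat) \<in> I"
  shows "x \<in> I"
  using assms(2)
proof (induction n)
  case 0
  then show ?case using one_imp_carrier I_notcarr by simp
next
  case (Suc n)
  then show ?case using I_prime[of "x [^] n" x] assms(1) by auto
qed

lemma (in ideal) minus_mem:
  "a \<in> I \<Longrightarrow> b \<in> I \<Longrightarrow> a \<ominus> b \<in> I"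
  unfolding a_minus_def by simp

section \<open>Colon ideals\<close>

definition colon_ideal :: "('a, 'b) ring_scheme \<Rightarrow> 'a set \<Rightarrow> 'a \<Rightarrow> 'a set" where
  "colon_ideal R I a = {x \<in> carrier R. x \<otimes>\<^bsub>R\<^esub> a \<in> I}"

context cring
begin

lemma colon_ideal_is_ideal:
  assumes "ideal I R" "a \<in> carrier R"
  shows "ideal (colon_ideal R I a) R"
proof -
  interpret I: ideal I R by fact
  show ?thesis
  proof (rule idealI[OF ring_axioms])
    show "subgroup (colon_ideal R I a) (add_monoid R)"
    proof
      show "colon_ideal R I a \<subseteq> carrier (add_monoid R)" "\<one>\<^bsub>add_monoid R\<^esub> \<in> colon_ideal R I a"
        using assms(2) unfolding colon_ideal_def by auto
      fix x y assume x: "x \<in> colon_ideal R I a" and y: "y \<in> colon_ideal R I a"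
      then have xy: "x \<in> carrier R" "y \<in> carrier R" "x \<otimes> a \<in> I" "y \<otimes> a \<in> I"
        unfolding colon_ideal_def by auto
      have "(x \<oplus> y) \<otimes> a = x \<otimes> a \<oplus> y \<otimes> a" "(\<ominus> x) \<otimes> a = \<ominus> (x \<otimes> a)"
        using xy assms(2) by algebra+
      then show "x \<otimes>\<^bsub>add_monoid R\<^esub> y \<in> colon_ideal R I a"
        and "inv\<^bsub>add_monoid R\<^esub> x \<in> colon_ideal R I a"
        using xy I.a_closed I.a_inv_closed unfolding colon_ideal_def a_inv_def[symmetric] by simp_all
    qed
  next
    fix x y assume "x \<in> colon_ideal R I a" "y \<in> carrier R"
    then have x: "x \<in> carrier R" "x \<otimes> a \<in> I" and y: "y \<in> carrier R"
      unfolding colon_ideal_def by auto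
    have "(y \<otimes> x) \<otimes> a = y \<otimes> (x \<otimes> a)" "(x \<otimes> y) \<otimes> a = y \<otimes> (x \<otimes> a)"
      using x y assms(2) by algebra+
    then show "y \<otimes> x \<in> colon_ideal R I a" "x \<otimes> y \<in> colon_ideal R I a"
      using x y I.I_l_closed unfolding colon_ideal_def by simp_all
  qed
qed

lemma subset_colon_ideal:
  assumes "ideal I R" "a \<in> carrier R"
  shows "I \<subseteq> colon_ideal R I a"
  using assms ideal.I_r_closed ideal.Icarr unfolding colon_ideal_def by fast

lemma mem_add_cgenideal_iff:
  "x \<in> I <+>\<^bsub>R\<^esub> PIdl a \<longleftrightarrow> (\<exists>i\<in>I. \<exists>r\<in>carrier R. x = i \<oplus> r \<otimes> a)"
  unfolding set_add_def' cgenideal_def by auto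

lemma add_cgenideal_ideal:
  assumes "ideal I R" "a \<in> carrier R"
  shows "ideal (I <+>\<^bsub>R\<^esub> PIdl a) R" "I \<subseteq> I <+>\<^bsub>R\<^esub> PIdl a" "a \<in> I <+>\<^bsub>R\<^esub> PIdl a"
proof -
  interpret I: ideal I R by fact
  show "ideal (I <+>\<^bsub>R\<^esub> PIdl a) R" by (rule add_ideals[OF assms(1) cgenideal_ideal[OF assms(2)]])
  show "I \<subseteq> I <+>\<^bsub>R\<^esub> PIdl a"
  proof
    fix x assume x: "x \<in> I"
    then have "x = x \<oplus> \<zero> \<otimes> a" using assms(2) I.Icarr by simp
    then show "x \<in> I <+>\<^bsub>R\<^esub> PIdl a" unfolding mem_add_cgenideal_iff using x by blast
  qed
  have "a = \<zero> \<oplus> \<one> \<otimes> a" using assms(2) by simp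
  then show "a \<in> I <+>\<^bsub>R\<^esub> PIdl a" unfolding mem_add_cgenideal_iff using I.zero_closed by blast
qed

end

lemma (in noetherian_cring) colon_ideal_pow_stabilizes:
  assumes I: "ideal I R" and x: "x \<in> carrier R"
  shows "\<exists>n::nat. colon_ideal R I (x [^] Suc n) \<subseteq> colon_ideal R I (x [^] n)"
proof -
  let ?S = "range (\<lambda>n::nat. colon_ideal R I (x [^] n))"
  obtain M where "M \<in> ?S" and max: "\<And>X. X \<in> ?S \<Longrightarrow> M \<subseteq> X \<Longrightarrow> X = M"
  proof (rule exists_maximal_in_ideal_set)
    show "?S \<noteq> {}" by blast
    show "?S \<subseteq> {I. ideal I R}" using colon_ideal_is_ideal[OF I] x by auto
  qed (rule that)
  then obtain n :: nat where M: "M = colon_ideal R I (x [^] n)" by blast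
  have "colon_ideal R I (x [^] n) \<subseteq> colon_ideal R I (x [^] Suc n)"
  proof
    fix y assume "y \<in> colon_ideal R I (x [^] n)"
    then have y: "y \<in> carrier R" "y \<otimes> x [^] n \<in> I" unfolding colon_ideal_def by auto
    then have "(y \<otimes> x [^] n) \<otimes> x \<in> I" using ideal.I_r_closed[OF I] x by blast
    then show "y \<in> colon_ideal R I (x [^] Suc n)"
      unfolding colon_ideal_def using y x by (simp add: m_assoc)
  qed
  then have "colon_ideal R I (x [^] Suc n) = colon_ideal R I (x [^] n)"
    using max[of "colon_ideal R I (x [^] Suc n)"] unfolding M by blast
  then show ?thesis by blast
qed

section \<open>Zero-dimensional quotients\<close>

lemma Sup_enat_eq_0_iff: "Sup {enat n | n. Q n} = 0 \<longleftrightarrow> (\<forall>n. Q n \<longrightarrow> n = 0)"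
  using Sup_bot_conv(1)[of "{enat n | n. Q n}"] unfolding bot_enat_def
  by (auto simp: enat_0_iff)

lemma krull_dim_eq_0_iff:
  "krull_dim S = 0 \<longleftrightarrow> \<not> (\<exists>P Q. primeideal P S \<and> primeideal Q S \<and> P \<subset> Q)"
  unfolding krull_dim_def Sup_enat_eq_0_iff
proof (intro iffI notI allI impI; elim exE conjE)
  fix P Q
  assume no_chain: "\<forall>n. (\<exists>C. (\<forall>i\<le>n. primeideal (C i) S) \<and> (\<forall>i<n. C i \<subset> C (Suc i))) \<longrightarrow> n = 0"
    and "primeideal P S" "primeideal Q S" "P \<subset> Q"
  then have "(\<forall>i\<le>1. primeideal (if i = 0 then P else Q) S) \<and>
      (\<forall>i<1. (if i = 0 then P else Q) \<subset> (if Suc i = 0 then P else Q))"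
    by (simp add: le_Suc_eq)
  then have "(1::nat) = 0" by (intro no_chain[rule_format] exI)
  then show False by simp
next
  fix n C
  assume no_pair: "\<nexists>P Q. primeideal P S \<and> primeideal Q S \<and> P \<subset> Q"
    and C: "\<forall>i\<le>n. primeideal (C i) S" "\<forall>i<n. C i \<subset> C (Suc i)"
  show "n = 0"
  proof (rule ccontr)
    assume "n \<noteq> 0"
    then have "primeideal (C 0) S" "primeideal (C (Suc 0)) S" "C 0 \<subset> C (Suc 0)"
      using C by auto
    then show False using no_pair by blast
  qed
qed

lemma primeideal_iff:
  "primeideal P R \<longleftrightarrow> ideal P R \<and> cring R \<and> carrier R \<noteq> P \<and>
     (\<forall>a\<in>carrier R. \<forall>b\<in>carrier R. a \<otimes>\<^bsub>R\<^esub> b \<in> P \<longrightarrow> a \<in> P \<or> b \<in> P)"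
  unfolding primeideal_def primeideal_axioms_def by auto

definition zero_dim_over :: "('a, 'b) ring_scheme \<Rightarrow> 'a set \<Rightarrow> bool" where
  "zero_dim_over R I \<longleftrightarrow> \<not> (\<exists>P Q. primeideal P R \<and> primeideal Q R \<and> I \<subseteq> P \<and> P \<subset> Q)"

lemma zero_dim_over_mono:
  "zero_dim_over R I \<Longrightarrow> I \<subseteq> J \<Longrightarrow> zero_dim_over R J"
  unfolding zero_dim_over_def by (meson subset_trans)

context cring
begin

lemma carrier_quot_eq_image:
  assumes "ideal I R"
  shows "carrier (R Quot I) = (+>) I ` carrier R"
  unfolding FactRing_def A_RCOSETS_def' by auto

lemma quot_primeideal_iff:
  assumes I: "ideal I R" and J: "ideal J R" "I \<subseteq> J"
  shows "primeideal ((+>) I ` J) (R Quot I) \<longleftrightarrow> primeideal J R"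
proof -
  have hom: "(+>) I \<in> ring_hom R (R Quot I)" by (rule ideal.rcos_ring_hom[OF I])
  have J_carr: "J \<subseteq> carrier R" using ideal.Icarr[OF J(1)] by blast
  have Union_eq: "\<Union>((+>) I ` J) = J" using ideal_incl_iff[OF I J(1)] J(2) by simp
  have "(+>) I ` J \<subseteq> carrier (R Quot I)"
    unfolding carrier_quot_eq_image[OF I] using J_carr by (rule image_mono)
  from canonical_proj_vimage_mem_iff[OF I this]
  have mem: "I +> a \<in> (+>) I ` J \<longleftrightarrow> a \<in> J" if "a \<in> carrier R" for a
    unfolding Union_eq using that by simp
  have mult: "(I +> a) \<otimes>\<^bsub>R Quot I\<^esub> (I +> b) = I +> (a \<otimes> b)"
    if "a \<in> carrier R" "b \<in> carrier R" for a b
    using ring_hom_mult[OF hom that] by simp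
  have "(+>) I ` carrier R = (+>) I ` J \<longleftrightarrow> carrier R = J"
  proof
    assume "(+>) I ` carrier R = (+>) I ` J"
    then have "carrier R \<subseteq> J" using mem by blast
    then show "carrier R = J" using J_carr by (rule equalityI)
  qed simp
  then have proper: "carrier (R Quot I) \<noteq> (+>) I ` J \<longleftrightarrow> carrier R \<noteq> J"
    unfolding carrier_quot_eq_image[OF I] by simp
  have prime: "(\<forall>X\<in>carrier (R Quot I). \<forall>Y\<in>carrier (R Quot I).
      X \<otimes>\<^bsub>R Quot I\<^esub> Y \<in> (+>) I ` J \<longrightarrow> X \<in> (+>) I ` J \<or> Y \<in> (+>) I ` J) \<longleftrightarrow>
    (\<forall>a\<in>carrier R. \<forall>b\<in>carrier R. a \<otimes> b \<in> J \<longrightarrow> a \<in> J \<or> b \<in> J)"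
    unfolding carrier_quot_eq_image[OF I] by (simp add: mult mem)
  show ?thesis
    unfolding primeideal_iff proper prime
    using ring_ideal_imp_quot_ideal[OF I J(1)] ideal.quotient_is_cring[OF I is_cring] J(1) is_cring
    by simp
qed

lemma quot_prime_chain_iff:
  assumes I: "ideal I R"
  shows "(\<exists>P Q. primeideal P (R Quot I) \<and> primeideal Q (R Quot I) \<and> P \<subset> Q) \<longleftrightarrow>
    (\<exists>P Q. primeideal P R \<and> primeideal Q R \<and> I \<subseteq> P \<and> P \<subset> Q)"
    (is "?quot \<longleftrightarrow> ?ring")
proof
  have bij: "bij_betw ((`) ((+>) I)) {J. ideal J R \<and> I \<subseteq> J} {J. ideal J (R Quot I)}"
    by (rule quot_ideal_correspondence[OF I])
  have lift: "\<exists>J. ideal J R \<and> I \<subseteq> J \<and> J' = (+>) I ` J" if "ideal J' (R Quot I)" for J'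
  proof -
    have "J' \<in> (`) ((+>) I) ` {J. ideal J R \<and> I \<subseteq> J}"
      using bij_betw_imp_surj_on[OF bij] that by simp
    then show ?thesis by blast
  qed
  assume ?quot
  then obtain P' Q' where P'Q': "primeideal P' (R Quot I)" "primeideal Q' (R Quot I)" "P' \<subset> Q'"
    by blast
  obtain P where P: "ideal P R" "I \<subseteq> P" "P' = (+>) I ` P"
    using lift primeideal.axioms(1)[OF P'Q'(1)] by blast
  obtain Q where Q: "ideal Q R" "I \<subseteq> Q" "Q' = (+>) I ` Q"
    using lift primeideal.axioms(1)[OF P'Q'(2)] by blast
  have "P = \<Union>P'" unfolding P(3) by (rule iffD1[OF ideal_incl_iff[OF I P(1)] P(2)])
  moreover have "Q = \<Union>Q'" unfolding Q(3) by (rule iffD1[OF ideal_incl_iff[OF I Q(1)] Q(2)])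
  ultimately have "P \<subseteq> Q" using P'Q'(3) by blast
  moreover have "P \<noteq> Q"
  proof
    assume "P = Q"
    then have "P' = Q'" unfolding P(3) Q(3) by (rule arg_cong)
    then show False using P'Q'(3) by simp
  qed
  ultimately have "P \<subset> Q" by (rule psubsetI)
  moreover have "primeideal P R" "primeideal Q R"
    using P'Q'(1,2) unfolding P(3) Q(3) quot_primeideal_iff[OF I P(1,2)] quot_primeideal_iff[OF I Q(1,2)] .
  ultimately show ?ring using P(2) by blast
next
  have inj: "inj_on ((`) ((+>) I)) {J. ideal J R \<and> I \<subseteq> J}"
    using quot_ideal_correspondence[OF I] by (rule bij_betw_imp_inj_on)
  assume ?ring
  then obtain P Q where PQ: "primeideal P R" "primeideal Q R" "I \<subseteq> P" "P \<subset> Q" by blast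
  have ideals: "ideal P R" "ideal Q R" using PQ(1,2) primeideal.axioms(1) by blast+
  have "(+>) I ` P \<noteq> (+>) I ` Q"
  proof
    assume "(+>) I ` P = (+>) I ` Q"
    then have "P = Q" by (rule inj_onD[OF inj]) (use ideals PQ(3,4) in auto)
    then show False using PQ(4) by simp
  qed
  then have "(+>) I ` P \<subset> (+>) I ` Q" using PQ(4) by blast
  moreover have "I \<subseteq> Q" using PQ(3,4) by blast
  then have "primeideal ((+>) I ` P) (R Quot I)" "primeideal ((+>) I ` Q) (R Quot I)"
    using quot_primeideal_iff[OF I ideals(1) PQ(3)] quot_primeideal_iff[OF I ideals(2)] PQ(1,2)
    by simp_all
  ultimately show ?quot by (intro exI conjI)
qed

lemma krull_dim_quot_eq_0_iff:
  assumes "ideal I R"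
  shows "krull_dim (R Quot I) = 0 \<longleftrightarrow> zero_dim_over R I"
  unfolding krull_dim_eq_0_iff zero_dim_over_def quot_prime_chain_iff[OF assms] ..

lemma zero_dim_over_Int:
  assumes I: "ideal I R" "zero_dim_over R I" and J: "ideal J R" "zero_dim_over R J"
  shows "zero_dim_over R (I \<inter> J)"
  unfolding zero_dim_over_def
proof (intro notI, elim exE conjE)
  fix P Q assume P: "primeideal P R" and Q: "primeideal Q R" and "I \<inter> J \<subseteq> P" "P \<subset> Q"
  have "I \<subseteq> P \<or> J \<subseteq> P"
    using primeideal_divides_ideal_prod[OF P I(1) J(1)] ideal_prod_inter[OF I(1) J(1)]
      \<open>I \<inter> J \<subseteq> P\<close> by blast
  then show False
    using I(2) J(2) P Q \<open>P \<subset> Q\<close> unfolding zero_dim_over_def by blast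
qed

end

section \<open>Ideals maximal among those avoiding an element\<close>

locale maximal_avoiding = noetherian_cring +
  fixes I and g
  assumes ideal_I: "ideal I R" and g_carrier: "g \<in> carrier R" and g_notin: "g \<notin> I"
    and maximal: "\<And>K. ideal K R \<Longrightarrow> I \<subset> K \<Longrightarrow> g \<in> K"
begin

lemma exists_mod_multiple:
  assumes y: "y \<in> carrier R" "y \<notin> I"
  shows "\<exists>r\<in>carrier R. g \<ominus> r \<otimes> y \<in> I"
proof -
  have "I \<subset> I <+>\<^bsub>R\<^esub> PIdl y" using add_cgenideal_ideal[OF ideal_I y(1)] y(2) by blast
  then have "g \<in> I <+>\<^bsub>R\<^esub> PIdl y" using maximal add_cgenideal_ideal(1)[OF ideal_I y(1)] by blast
  then obtain i r where ir: "i \<in> I" "r \<in> carrier R" "g = i \<oplus> r \<otimes> y"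
    unfolding mem_add_cgenideal_iff by blast
  have "g \<ominus> r \<otimes> y = i" unfolding ir(3) using ideal.Icarr[OF ideal_I ir(1)] ir(2) y(1) by algebra
  with ir(1,2) show ?thesis by auto
qed

lemma colon_subset_primeideal:
  assumes P: "primeideal P R" "I \<subseteq> P"
  shows "colon_ideal R I g \<subseteq> P"
proof
  interpret I: ideal I R by (rule ideal_I)
  fix x assume "x \<in> colon_ideal R I g"
  then have x: "x \<in> carrier R" "x \<otimes> g \<in> I" unfolding colon_ideal_def by auto
  obtain n :: nat where stable: "colon_ideal R I (x [^] Suc n) \<subseteq> colon_ideal R I (x [^] n)"
    using colon_ideal_pow_stabilizes[OF ideal_I x(1)] by blast
  have xn: "x [^] n \<in> carrier R" using x(1) by simp
  have "x [^] n \<in> I"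
  proof (rule ccontr)
    assume "x [^] n \<notin> I"
    then obtain r where r: "r \<in> carrier R" "g \<ominus> r \<otimes> x [^] n \<in> I"
      using exists_mod_multiple xn by blast
    have "r \<otimes> x [^] Suc n = x \<otimes> g \<ominus> x \<otimes> (g \<ominus> r \<otimes> x [^] n)"
      unfolding nat_pow_Suc using r(1) x(1) xn g_carrier by algebra
    also have "\<dots> \<in> I" using x(2) I.I_l_closed[OF r(2) x(1)] by (rule I.minus_mem)
    finally have "r \<otimes> x [^] n \<in> I"
      using stable r(1) unfolding colon_ideal_def by blast
    then have "(g \<ominus> r \<otimes> x [^] n) \<oplus> r \<otimes> x [^] n \<in> I" using r(2) by simp
    moreover have "(g \<ominus> r \<otimes> x [^] n) \<oplus> r \<otimes> x [^] n = g" using r(1) xn g_carrier by algebra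
    ultimately show False using g_notin by simp
  qed
  then show "x \<in> P" using primeideal.pow_mem_imp_mem[OF P(1) x(1)] P(2) by blast
qed

lemma primeideal_eq_colon:
  assumes P: "primeideal P R" "I \<subseteq> P"
  shows "P = colon_ideal R I g"
proof
  interpret P: primeideal P R by fact
  show "P \<subseteq> colon_ideal R I g"
  proof
    fix x assume xP: "x \<in> P"
    have x: "x \<in> carrier R" using xP P.Icarr by blast
    show "x \<in> colon_ideal R I g"
    proof (rule ccontr)
      assume "x \<notin> colon_ideal R I g"
      then have "x \<otimes> g \<notin> I" unfolding colon_ideal_def using x by simp
      then obtain r where r: "r \<in> carrier R" "g \<ominus> r \<otimes> (x \<otimes> g) \<in> I"
        using exists_mod_multiple x g_carrier by blast
      have "(\<one> \<ominus> r \<otimes> x) \<otimes> g = g \<ominus> r \<otimes> (x \<otimes> g)" using r(1) x g_carrier by algebra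
      then have "\<one> \<ominus> r \<otimes> x \<in> P"
        using colon_subset_primeideal[OF P] r x unfolding colon_ideal_def by auto
      moreover have "r \<otimes> x \<in> P" using P.I_l_closed[OF xP r(1)] .
      ultimately have "(\<one> \<ominus> r \<otimes> x) \<oplus> r \<otimes> x \<in> P" by (rule P.a_closed)
      moreover have "(\<one> \<ominus> r \<otimes> x) \<oplus> r \<otimes> x = \<one>" using r(1) x by algebra
      ultimately show False using P.one_imp_carrier P.I_notcarr by simp
    qed
  qed
qed (rule colon_subset_primeideal[OF P])

lemma zero_dim: "zero_dim_over R I"
  unfolding zero_dim_over_def
proof (intro notI, elim exE conjE)
  fix P Q assume P: "primeideal P R" "I \<subseteq> P" and Q: "primeideal Q R" and "P \<subset> Q"
  then have "I \<subseteq> Q" by blast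
  have "P = colon_ideal R I g" using primeideal_eq_colon[OF P] .
  moreover have "Q = colon_ideal R I g" using primeideal_eq_colon[OF Q \<open>I \<subseteq> Q\<close>] .
  ultimately show False using \<open>P \<subset> Q\<close> by simp
qed

end

context noetherian_cring
begin

lemma exists_zero_dim_ideal_avoiding_elem:
  assumes J: "ideal J R" and g: "g \<in> carrier R" "g \<notin> J"
  obtains I where "ideal I R" "J \<subseteq> I" "g \<notin> I" "zero_dim_over R I"
proof -
  let ?S = "{I. ideal I R \<and> J \<subseteq> I \<and> g \<notin> I}"
  obtain I where I: "I \<in> ?S" and max: "\<And>X. X \<in> ?S \<Longrightarrow> I \<subseteq> X \<Longrightarrow> X = I"
  proof (rule exists_maximal_in_ideal_set)
    show "?S \<noteq> {}" using J g by blast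
  qed auto
  have I': "ideal I R" "J \<subseteq> I" "g \<notin> I" using I by auto
  have "g \<in> K" if K: "ideal K R" "I \<subset> K" for K
  proof (rule ccontr)
    assume "g \<notin> K"
    then have "K = I" using max[OF _ psubset_imp_subset[OF K(2)]] K(1) I'(2) K(2) by blast
    then show False using K(2) by simp
  qed
  then interpret maximal_avoiding R I g
    by (intro maximal_avoiding.intro noetherian_cring_axioms maximal_avoiding_axioms.intro I'(1,3) g(1))
  show thesis using that I' zero_dim by blast
qed

lemma exists_zero_dim_ideal_avoiding:
  assumes J: "ideal J R" "\<one> \<notin> J" and G: "finite G" "G \<subseteq> carrier R" "G \<inter> J = {}"
  shows "\<exists>I. ideal I R \<and> J \<subseteq> I \<and> \<one> \<notin> I \<and> G \<inter> I = {} \<and> zero_dim_over R I"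
  using G
proof (induction G rule: finite_induct)
  case empty
  obtain I where "ideal I R" "J \<subseteq> I" "\<one> \<notin> I" "zero_dim_over R I"
    using exists_zero_dim_ideal_avoiding_elem[OF J(1) one_closed J(2)] .
  then show ?case by blast
next
  case (insert g G)
  then have G: "G \<subseteq> carrier R" "G \<inter> J = {}" and g: "g \<in> carrier R" "g \<notin> J" by auto
  obtain I\<^sub>1 where I\<^sub>1: "ideal I\<^sub>1 R" "J \<subseteq> I\<^sub>1" "\<one> \<notin> I\<^sub>1" "G \<inter> I\<^sub>1 = {}" "zero_dim_over R I\<^sub>1"
    using insert.IH[OF G] by blast
  obtain I\<^sub>2 where I\<^sub>2: "ideal I\<^sub>2 R" "J \<subseteq> I\<^sub>2" "g \<notin> I\<^sub>2" "zero_dim_over R I\<^sub>2"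
    using exists_zero_dim_ideal_avoiding_elem[OF J(1) g] .
  have "ideal (I\<^sub>1 \<inter> I\<^sub>2) R" using I\<^sub>1(1) I\<^sub>2(1) by (rule i_intersect)
  moreover have "J \<subseteq> I\<^sub>1 \<inter> I\<^sub>2" "\<one> \<notin> I\<^sub>1 \<inter> I\<^sub>2" "insert g G \<inter> (I\<^sub>1 \<inter> I\<^sub>2) = {}"
    using I\<^sub>1 I\<^sub>2 by auto
  moreover have "zero_dim_over R (I\<^sub>1 \<inter> I\<^sub>2)"
    using I\<^sub>1(1,5) I\<^sub>2(1,4) by (rule zero_dim_over_Int)
  ultimately show ?case by (intro exI conjI)
qed

end

section \<open>Ideals of finite index\<close>

definition finite_index :: "('a, 'b) ring_scheme \<Rightarrow> 'a set \<Rightarrow> bool" where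
  "finite_index R I \<longleftrightarrow>
     (\<exists>S. finite S \<and> S \<subseteq> carrier R \<and> (\<forall>x\<in>carrier R. \<exists>s\<in>S. x \<ominus>\<^bsub>R\<^esub> s \<in> I))"

context cring
begin

lemma finite_index_carrier: "finite_index R (carrier R)"
  unfolding finite_index_def by (intro exI[of _ "{\<zero>}"]) auto

lemma finite_quotient_imp_finite_index:
  assumes I: "ideal I R" and fin: "finite (carrier (R Quot I))"
  shows "finite_index R I"
proof -
  obtain S where S: "S \<subseteq> carrier R" "finite S" "(+>) I ` carrier R = (+>) I ` S"
    using finite_subset_image[OF fin[unfolded carrier_quot_eq_image[OF I]] order_refl]
    by (elim exE conjE) (rule that)
  have "\<exists>s\<in>S. x \<ominus> s \<in> I" if x: "x \<in> carrier R" for x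
  proof -
    have "I +> x \<in> (+>) I ` S" unfolding S(3)[symmetric] using x by (rule imageI)
    then obtain s where s: "s \<in> S" "I +> x = I +> s" by blast
    have "s \<in> carrier R" using s(1) S(1) by blast
    then have "x \<ominus> s \<in> I" using quotient_eq_iff_same_a_r_cos[OF I x] s(2) by simp
    with s(1) show ?thesis by blast
  qed
  with S(1,2) show ?thesis unfolding finite_index_def by blast
qed

lemma finite_index_of_add_colon:
  assumes I: "ideal I R" and a: "a \<in> carrier R"
    and fin_add: "finite_index R (I <+>\<^bsub>R\<^esub> PIdl a)"
    and fin_colon: "finite_index R (colon_ideal R I a)"
  shows "finite_index R I"
proof -
  interpret I: ideal I R by fact
  obtain S1 where S1: "finite S1" "S1 \<subseteq> carrier R"
      "\<forall>x\<in>carrier R. \<exists>s\<in>S1. x \<ominus> s \<in> I <+>\<^bsub>R\<^esub> PIdl a"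
    using fin_add unfolding finite_index_def by blast
  obtain S2 where S2: "finite S2" "S2 \<subseteq> carrier R"
      "\<forall>x\<in>carrier R. \<exists>s\<in>S2. x \<ominus> s \<in> colon_ideal R I a"
    using fin_colon unfolding finite_index_def by blast
  define S where "S = (\<lambda>(s1, s2). s1 \<oplus> s2 \<otimes> a) ` (S1 \<times> S2)"
  have "\<exists>s\<in>S. x \<ominus> s \<in> I" if x: "x \<in> carrier R" for x
  proof -
    obtain s1 where s1: "s1 \<in> S1" "x \<ominus> s1 \<in> I <+>\<^bsub>R\<^esub> PIdl a" using S1(3) x by blast
    then obtain i r where ir: "i \<in> I" "r \<in> carrier R" "x \<ominus> s1 = i \<oplus> r \<otimes> a"
      unfolding mem_add_cgenideal_iff by blast
    obtain s2 where s2: "s2 \<in> S2" "r \<ominus> s2 \<in> colon_ideal R I a" using S2(3) ir(2) by blast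
    have carr: "s1 \<in> carrier R" "s2 \<in> carrier R" "i \<in> carrier R"
      using s1(1) s2(1) S1(2) S2(2) ir(1) I.Icarr by auto
    have "x \<ominus> (s1 \<oplus> s2 \<otimes> a) = (x \<ominus> s1) \<ominus> s2 \<otimes> a" using x carr a by algebra
    also have "\<dots> = i \<oplus> (r \<ominus> s2) \<otimes> a" unfolding ir(3) using carr ir(2) a by algebra
    also have "\<dots> \<in> I" using ir(1) s2(2) unfolding colon_ideal_def by simp
    finally show ?thesis using s1(1) s2(1) unfolding S_def by force
  qed
  moreover have "finite S" "S \<subseteq> carrier R"
    unfolding S_def using S1(1,2) S2(1,2) a by (auto simp: subset_eq)
  ultimately show ?thesis unfolding finite_index_def by blast
qed

lemma finite_index_imp_finite_ideals_above:
  assumes "finite_index R I"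
  shows "finite {J. ideal J R \<and> I \<subseteq> J}"
proof -
  obtain S where S: "finite S" "S \<subseteq> carrier R" "\<forall>x\<in>carrier R. \<exists>s\<in>S. x \<ominus> s \<in> I"
    using assms unfolding finite_index_def by blast
  have subset_by_trace: "J \<subseteq> K"
    if J: "ideal J R" "I \<subseteq> J" and K: "ideal K R" "I \<subseteq> K" and trace: "J \<inter> S \<subseteq> K" for J K
  proof
    fix x assume "x \<in> J"
    then have x: "x \<in> carrier R" using ideal.Icarr[OF J(1)] by blast
    obtain s where s: "s \<in> S" "x \<ominus> s \<in> I" using S(3) x by blast
    have sc: "s \<in> carrier R" using s(1) S(2) by blast
    have "x \<ominus> (x \<ominus> s) \<in> J" using ideal.minus_mem[OF J(1) \<open>x \<in> J\<close>] s(2) J(2) by blast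
    moreover have "x \<ominus> (x \<ominus> s) = s" using x sc by algebra
    ultimately have "s \<in> K" using trace s(1) by auto
    with s(2) K(2) have "(x \<ominus> s) \<oplus> s \<in> K"
      using additive_subgroup.a_closed[OF ideal.axioms(1)[OF K(1)]] by blast
    moreover have "(x \<ominus> s) \<oplus> s = x" using x sc by algebra
    ultimately show "x \<in> K" by simp
  qed
  have "(\<lambda>J. J \<inter> S) ` {J. ideal J R \<and> I \<subseteq> J} \<subseteq> Pow S" by blast
  then have "finite ((\<lambda>J. J \<inter> S) ` {J. ideal J R \<and> I \<subseteq> J})"
    using S(1) by (rule finite_subset[OF _ finite_Pow_iff[THEN iffD2]])
  moreover have "inj_on (\<lambda>J. J \<inter> S) {J. ideal J R \<and> I \<subseteq> J}"
  proof (rule inj_onI)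
    fix J K assume "J \<in> {J. ideal J R \<and> I \<subseteq> J}" "K \<in> {J. ideal J R \<and> I \<subseteq> J}" "J \<inter> S = K \<inter> S"
    then have J: "ideal J R" "I \<subseteq> J" and K: "ideal K R" "I \<subseteq> K"
      and JK: "J \<inter> S \<subseteq> K" and KJ: "K \<inter> S \<subseteq> J" by auto
    show "J = K" using subset_by_trace[OF J K JK] subset_by_trace[OF K J KJ] by (rule equalityI)
  qed
  ultimately show ?thesis by (rule finite_imageD)
qed

end

lemma (in noetherian_cring) zero_dim_primeideal_is_maximal:
  assumes "primeideal P R" "zero_dim_over R P"
  shows "maximalideal P R"
proof -
  interpret P: primeideal P R by fact
  obtain M where M: "maximalideal M R" "P \<subseteq> M"
    by (rule exists_maximalideal_above[OF P.is_ideal]) (use P.I_notcarr in auto)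
  have "P = M"
  proof (rule ccontr)
    assume "P \<noteq> M"
    with M(2) have "P \<subset> M" by blast
    with assms(1) maximalideal_prime[OF M(1)]
    have "\<exists>P' Q. primeideal P' R \<and> primeideal Q R \<and> P \<subseteq> P' \<and> P' \<subset> Q"
      by (intro exI conjI) auto
    with assms(2) show False unfolding zero_dim_over_def by (rule notE)
  qed
  then show ?thesis using M(1) by simp
qed

lemma (in cring) finite_index_if_not_primeideal:
  assumes I: "ideal I R" "I \<noteq> carrier R" "\<not> primeideal I R"
    and above: "\<And>J. ideal J R \<Longrightarrow> I \<subset> J \<Longrightarrow> finite_index R J"
  shows "finite_index R I"
proof -
  have "\<exists>a\<in>carrier R. \<exists>b\<in>carrier R. a \<otimes> b \<in> I \<and> a \<notin> I \<and> b \<notin> I"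
  proof (rule ccontr)
    assume "\<not> ?thesis"
    then have "primeideal I R" using I(2) by (intro primeidealI[OF I(1) is_cring]) auto
    with I(3) show False by contradiction
  qed
  then obtain a b where ab: "a \<in> carrier R" "b \<in> carrier R" "a \<otimes> b \<in> I" "a \<notin> I" "b \<notin> I"
    by blast
  have "I \<subset> I <+>\<^bsub>R\<^esub> PIdl a" using add_cgenideal_ideal(2,3)[OF I(1) ab(1)] ab(4) by blast
  then have "finite_index R (I <+>\<^bsub>R\<^esub> PIdl a)"
    by (rule above[OF add_cgenideal_ideal(1)[OF I(1) ab(1)]])
  moreover have "b \<in> colon_ideal R I a"
    using ab(1-3) m_comm[OF ab(1,2)] unfolding colon_ideal_def by simp
  then have "I \<subset> colon_ideal R I a" using subset_colon_ideal[OF I(1) ab(1)] ab(5) by blast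
  then have "finite_index R (colon_ideal R I a)"
    by (rule above[OF colon_ideal_is_ideal[OF I(1) ab(1)]])
  ultimately show ?thesis by (rule finite_index_of_add_colon[OF I(1) ab(1)])
qed

lemma (in noetherian_cring) zero_dim_imp_finite_index:
  assumes residue: "\<And>M. maximalideal M R \<Longrightarrow> finite (carrier (R Quot M))"
    and "ideal I\<^sub>0 R" "zero_dim_over R I\<^sub>0"
  shows "finite_index R I\<^sub>0"
proof (rule ccontr)
  let ?S = "{I. ideal I R \<and> zero_dim_over R I \<and> \<not> finite_index R I}"
  assume "\<not> finite_index R I\<^sub>0"
  obtain I where "I \<in> ?S" and max: "\<And>J. J \<in> ?S \<Longrightarrow> I \<subseteq> J \<Longrightarrow> J = I"
  proof (rule exists_maximal_in_ideal_set)
    show "?S \<noteq> {}" using assms(2,3) \<open>\<not> finite_index R I\<^sub>0\<close> by blast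
  qed auto
  then have I: "ideal I R" "zero_dim_over R I" "\<not> finite_index R I" by auto
  have above: "finite_index R J" if J: "ideal J R" "I \<subset> J" for J
  proof (rule ccontr)
    assume "\<not> finite_index R J"
    then have "J = I"
      using max[OF _ psubset_imp_subset[OF J(2)]] J(1)
        zero_dim_over_mono[OF I(2) psubset_imp_subset[OF J(2)]] by blast
    then show False using J(2) by simp
  qed
  show False
  proof (cases "primeideal I R")
    case True
    then have "maximalideal I R" using zero_dim_primeideal_is_maximal I(2) by blast
    then show False using finite_quotient_imp_finite_index[OF I(1)] residue I(3) by blast
  next
    case False
    have "I \<noteq> carrier R" using I(3) finite_index_carrier by blast
    then show False using finite_index_if_not_primeideal[OF I(1) _ False above] I(3) by blast
  qed
qed

lemma (in noetherian_cring) zero_dim_ideal_finitely_many_above: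
  assumes "\<And>M. maximalideal M R \<Longrightarrow> finite (carrier (R Quot M))"
    and "ideal I R" "zero_dim_over R I"
  shows "finite {J. ideal J R \<and> I \<subseteq> J}"
  by (rule finite_index_imp_finite_ideals_above[OF zero_dim_imp_finite_index[OF assms]])

section \<open>The Zariski and the constructible topology on ideals\<close>

lemma zariski_basic_empty: "zariski_basic R {} = ideals_of R"
  unfolding zariski_basic_def by simp

lemma zariski_basic_Un: "zariski_basic R (F \<union> G) = zariski_basic R F \<inter> zariski_basic R G"
  unfolding zariski_basic_def by auto

lemma openin_zariski_basic:
  "finite F \<Longrightarrow> F \<subseteq> carrier R \<Longrightarrow> openin (zariski_ideals R) (zariski_basic R F)"
  unfolding zariski_ideals_def openin_topology_generated_by_iff
  by (rule generate_topology_on.Basis) blast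

lemma zariski_topspace: "topspace (zariski_ideals R) = ideals_of R"
proof -
  have "topspace (zariski_ideals R) = \<Union>{zariski_basic R F | F. finite F \<and> F \<subseteq> carrier R}"
    unfolding zariski_ideals_def by (rule topology_generated_by_topspace)
  also have "\<dots> = ideals_of R"
  proof
    show "ideals_of R \<subseteq> \<Union>{zariski_basic R F | F. finite F \<and> F \<subseteq> carrier R}"
      unfolding zariski_basic_empty[symmetric] by blast
  qed (auto simp: zariski_basic_def)
  finally show ?thesis .
qed

lemma zariski_open_imp_basic_nbhd:
  assumes "openin (zariski_ideals R) U" "J \<in> U"
  shows "\<exists>F. finite F \<and> F \<subseteq> carrier R \<and> J \<in> zariski_basic R F \<and> zariski_basic R F \<subseteq> U"
proof -
  have "generate_topology_on {zariski_basic R F | F. finite F \<and> F \<subseteq> carrier R} U"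
    using assms(1) unfolding zariski_ideals_def by (rule openin_topology_generated_by)
  then show ?thesis using assms(2)
  proof (induction arbitrary: J)
    case Empty
    then show ?case by simp
  next
    case (Int U V)
    obtain F where F: "finite F" "F \<subseteq> carrier R" "J \<in> zariski_basic R F" "zariski_basic R F \<subseteq> U"
      using Int.IH(1)[of J] Int.prems by blast
    obtain G where G: "finite G" "G \<subseteq> carrier R" "J \<in> zariski_basic R G" "zariski_basic R G \<subseteq> V"
      using Int.IH(2)[of J] Int.prems by blast
    show ?case
      by (intro exI[of _ "F \<union> G"]) (use F G in \<open>auto simp: zariski_basic_Un\<close>)
  next
    case (UN \<K>)
    then obtain K where "K \<in> \<K>" "J \<in> K" by blast
    then show ?case using UN.IH[of K J] by blast
  next
    case (Basis B)
    then show ?case by blast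
  qed
qed

lemma (in ring) zariski_basic_eq_ideals_above:
  assumes "A \<subseteq> carrier R"
  shows "zariski_basic R A = {J \<in> ideals_of R. Idl A \<subseteq> J}"
  using genideal_minimal genideal_self[OF assms] unfolding zariski_basic_def ideals_of_def by blast

lemma (in ring) compactin_zariski_basic:
  assumes F: "finite F" "F \<subseteq> carrier R"
  shows "compactin (zariski_ideals R) (zariski_basic R F)"
  unfolding compactin_def
proof (intro conjI allI impI)
  show "zariski_basic R F \<subseteq> topspace (zariski_ideals R)"
    unfolding zariski_topspace zariski_basic_def by blast
  fix \<U> assume \<U>: "(\<forall>U\<in>\<U>. openin (zariski_ideals R) U) \<and> zariski_basic R F \<subseteq> \<Union>\<U>"
  have gen: "Idl F \<in> zariski_basic R F"
    unfolding zariski_basic_eq_ideals_above[OF F(2)] ideals_of_def using genideal_ideal[OF F(2)] by simp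
  then obtain U where U: "U \<in> \<U>" "Idl F \<in> U" using \<U> by blast
  then obtain F' where F': "F' \<subseteq> carrier R" "Idl F \<in> zariski_basic R F'" "zariski_basic R F' \<subseteq> U"
    using zariski_open_imp_basic_nbhd[of R U "Idl F"] \<U> by blast
  have "Idl F' \<subseteq> Idl F" using F'(2) unfolding zariski_basic_eq_ideals_above[OF F'(1)] by simp
  then have "zariski_basic R F \<subseteq> zariski_basic R F'"
    unfolding zariski_basic_eq_ideals_above[OF F(2)] zariski_basic_eq_ideals_above[OF F'(1)] by blast
  then show "\<exists>\<V>. finite \<V> \<and> \<V> \<subseteq> \<U> \<and> zariski_basic R F \<subseteq> \<Union>\<V>"
    using U(1) F'(3) by (intro exI[of _ "{U}"]) auto
qed

lemma (in ring) constructible_topspace: "topspace (constructible_ideals R) = ideals_of R"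
proof -
  let ?\<B> = "{U. openin (zariski_ideals R) U \<and> compactin (zariski_ideals R) U} \<union>
      {ideals_of R - U | U. openin (zariski_ideals R) U \<and> compactin (zariski_ideals R) U}"
  have "topspace (constructible_ideals R) = \<Union>?\<B>"
    unfolding constructible_ideals_def by (rule topology_generated_by_topspace)
  also have "\<dots> = ideals_of R"
  proof
    show "\<Union>?\<B> \<subseteq> ideals_of R"
      using openin_subset[of "zariski_ideals R"] unfolding zariski_topspace by blast
    have "ideals_of R \<in> ?\<B>"
      using openin_zariski_basic[of "{}" R] compactin_zariski_basic[of "{}"]
      unfolding zariski_basic_empty by blast
    then show "ideals_of R \<subseteq> \<Union>?\<B>" by blast
  qed
  finally show ?thesis .
qed

lemma openin_constructible_if_compact_open:
  assumes "openin (zariski_ideals R) U" "compactin (zariski_ideals R) U"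
  shows "openin (constructible_ideals R) U" "openin (constructible_ideals R) (ideals_of R - U)"
  unfolding constructible_ideals_def openin_topology_generated_by_iff
  by (rule generate_topology_on.Basis, use assms in blast)+

definition constructible_basic :: "('a, 'b) ring_scheme \<Rightarrow> 'a set \<Rightarrow> 'a set \<Rightarrow> 'a set set" where
  "constructible_basic R F G = {I \<in> ideals_of R. F \<subseteq> I \<and> G \<inter> I = {}}"

lemma compact_open_separated_by_elements:
  assumes V: "openin (zariski_ideals R) V" "compactin (zariski_ideals R) V"
    and J: "J \<in> ideals_of R" "J \<notin> V"
  obtains G where "finite G" "G \<subseteq> carrier R" "G \<inter> J = {}" "\<And>I. I \<in> V \<Longrightarrow> G \<inter> I \<noteq> {}"
proof -
  let ?\<F> = "{F. finite F \<and> F \<subseteq> carrier R \<and> zariski_basic R F \<subseteq> V}"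
  have "V \<subseteq> \<Union>(zariski_basic R ` ?\<F>)" using zariski_open_imp_basic_nbhd[OF V(1)] by blast
  moreover have "\<forall>U\<in>zariski_basic R ` ?\<F>. openin (zariski_ideals R) U"
    using openin_zariski_basic by blast
  ultimately have "\<exists>\<V>. finite \<V> \<and> \<V> \<subseteq> zariski_basic R ` ?\<F> \<and> V \<subseteq> \<Union>\<V>"
    using V(2) unfolding compactin_def by blast
  then obtain \<F> where \<F>: "finite \<F>" "\<F> \<subseteq> ?\<F>" "V \<subseteq> \<Union>(zariski_basic R ` \<F>)"
    unfolding ex_finite_subset_image by blast
  have "\<exists>g. g \<in> F \<and> g \<notin> J" if "F \<in> \<F>" for F
  proof (rule ccontr)
    assume "\<nexists>g. g \<in> F \<and> g \<notin> J"
    then have "J \<in> zariski_basic R F" using J(1) unfolding zariski_basic_def by blast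
    then show False using that \<F>(2) J(2) by blast
  qed
  then obtain g where g: "\<And>F. F \<in> \<F> \<Longrightarrow> g F \<in> F \<and> g F \<notin> J" by metis
  show thesis
  proof (rule that[of "g ` \<F>"])
    show "finite (g ` \<F>)" using \<F>(1) by simp
    show "g ` \<F> \<subseteq> carrier R" using g \<F>(2) by blast
    show "g ` \<F> \<inter> J = {}" using g by blast
    fix I assume "I \<in> V"
    then obtain F where "F \<in> \<F>" "I \<in> zariski_basic R F" using \<F>(3) by blast
    then show "g ` \<F> \<inter> I \<noteq> {}" using g unfolding zariski_basic_def by blast
  qed
qed

lemma constructible_open_imp_basic_nbhd:
  assumes "openin (constructible_ideals R) U" "J \<in> U"
  shows "\<exists>F G. F \<subseteq> J \<and> finite G \<and> G \<subseteq> carrier R \<and> G \<inter> J = {} \<and> constructible_basic R F G \<subseteq> U"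
proof -
  have "generate_topology_on
      ({U. openin (zariski_ideals R) U \<and> compactin (zariski_ideals R) U} \<union>
       {ideals_of R - U | U. openin (zariski_ideals R) U \<and> compactin (zariski_ideals R) U}) U"
    using assms(1) unfolding constructible_ideals_def by (rule openin_topology_generated_by)
  then show ?thesis using assms(2)
  proof (induction arbitrary: J)
    case Empty
    then show ?case by simp
  next
    case (Int U V)
    obtain F G where FG: "F \<subseteq> J" "finite G" "G \<subseteq> carrier R" "G \<inter> J = {}" "constructible_basic R F G \<subseteq> U"
      using Int.IH(1)[of J] Int.prems by blast
    obtain F' G' where FG': "F' \<subseteq> J" "finite G'" "G' \<subseteq> carrier R" "G' \<inter> J = {}"
      "constructible_basic R F' G' \<subseteq> V"
      using Int.IH(2)[of J] Int.prems by blast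
    have "constructible_basic R (F \<union> F') (G \<union> G') \<subseteq> U \<inter> V"
      using FG(5) FG'(5) unfolding constructible_basic_def by blast
    then show ?case using FG FG' by (intro exI[of _ "F \<union> F'"] exI[of _ "G \<union> G'"]) auto
  next
    case (UN \<K>)
    then obtain K where "K \<in> \<K>" "J \<in> K" by blast
    then show ?case using UN.IH[of K J] by blast
  next
    case (Basis B)
    show ?case
    proof (cases "openin (zariski_ideals R) B")
      case True
      then obtain F where "J \<in> zariski_basic R F" "zariski_basic R F \<subseteq> B"
        using zariski_open_imp_basic_nbhd Basis.prems by blast
      then show ?thesis unfolding zariski_basic_def constructible_basic_def
        by (intro exI[of _ F] exI[of _ "{}"]) auto
    next
      case False
      then obtain V where V: "openin (zariski_ideals R) V" "compactin (zariski_ideals R) V"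
        and B: "B = ideals_of R - V" using Basis.hyps by blast
      then obtain G where G: "finite G" "G \<subseteq> carrier R" "G \<inter> J = {}" "\<And>I. I \<in> V \<Longrightarrow> G \<inter> I \<noteq> {}"
        using compact_open_separated_by_elements[OF V, of J] Basis.prems by blast
      then have "constructible_basic R {} G \<subseteq> B" unfolding B constructible_basic_def by blast
      with G(1-3) show ?thesis by (intro exI[of _ "{}"] exI[of _ G]) auto
    qed
  qed
qed

lemma (in noetherian_cring) constructible_open_meets_zero_dim:
  assumes "openin (constructible_ideals R) U" "J \<in> U" "J \<in> proper_ideals_of R"
  shows "\<exists>I\<in>U. I \<in> proper_ideals_of R \<and> zero_dim_over R I"
proof -
  obtain F G where FG: "F \<subseteq> J" "finite G" "G \<subseteq> carrier R" "G \<inter> J = {}"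
    "constructible_basic R F G \<subseteq> U"
    using constructible_open_imp_basic_nbhd[OF assms(1,2)] by blast
  have J: "ideal J R" "\<one> \<notin> J"
    using assms(3) ideal.one_imp_carrier unfolding proper_ideals_of_def by blast+
  obtain I where I: "ideal I R" "J \<subseteq> I" "\<one> \<notin> I" "G \<inter> I = {}" "zero_dim_over R I"
    using exists_zero_dim_ideal_avoiding[OF J FG(2-4)] by blast
  have "I \<in> U" using FG(1,5) I(1,2,4) unfolding constructible_basic_def ideals_of_def by blast
  moreover have "I \<in> proper_ideals_of R" using I(1,3) unfolding proper_ideals_of_def by auto
  ultimately show ?thesis using I(5) by blast
qed

lemma (in noetherian_ring) constructible_open_ideals_above:
  assumes "ideal X R"
  shows "openin (constructible_ideals R) {J \<in> ideals_of R. X \<subseteq> J}"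
    and "openin (constructible_ideals R) (ideals_of R - {J \<in> ideals_of R. X \<subseteq> J})"
proof -
  obtain A where A: "A \<subseteq> carrier R" "finite A" "X = Idl A" using finetely_gen[OF assms] by blast
  then have "{J \<in> ideals_of R. X \<subseteq> J} = zariski_basic R A"
    using zariski_basic_eq_ideals_above[OF A(1)] by simp
  then show "openin (constructible_ideals R) {J \<in> ideals_of R. X \<subseteq> J}"
    and "openin (constructible_ideals R) (ideals_of R - {J \<in> ideals_of R. X \<subseteq> J})"
    using openin_constructible_if_compact_open[OF openin_zariski_basic[OF A(2,1)]
        compactin_zariski_basic[OF A(2,1)]] by simp_all
qed

lemma (in noetherian_ring) constructible_open_singleton:
  assumes I: "ideal I R" and fin: "finite {J. ideal J R \<and> I \<subseteq> J}"
  shows "openin (constructible_ideals R) {I}"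
proof -
  let ?above = "\<lambda>X. {J \<in> ideals_of R. X \<subseteq> J}"
  let ?\<K> = "(\<lambda>K. ideals_of R - ?above K) ` {K. ideal K R \<and> I \<subset> K}"
  have "{I} = ?above I \<inter> \<Inter>?\<K>"
  proof
    show "{I} \<subseteq> ?above I \<inter> \<Inter>?\<K>" using I unfolding ideals_of_def by auto
    show "?above I \<inter> \<Inter>?\<K> \<subseteq> {I}"
    proof
      fix J assume J: "J \<in> ?above I \<inter> \<Inter>?\<K>"
      show "J \<in> {I}"
      proof (rule ccontr)
        assume "J \<notin> {I}"
        with J have "ideal J R" "I \<subset> J" unfolding ideals_of_def by auto
        then have "ideals_of R - ?above J \<in> ?\<K>" by blast
        with J have "J \<notin> ?above J" by blast
        with J show False by blast
      qed
    qed
  qed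
  moreover have "finite {K. ideal K R \<and> I \<subset> K}" by (rule finite_subset[OF _ fin]) auto
  then have "finite ?\<K>" by simp
  then have "openin (constructible_ideals R) (?above I \<inter> \<Inter>?\<K>)"
    using constructible_open_ideals_above I by (intro openin_Int_Inter) auto
  ultimately show ?thesis by simp
qed

theorem proposition5p5:
  fixes R :: "('a, 'b) ring_scheme" (structure)
  assumes "cring R" and "noetherian_ring R"
  defines "Ctop \<equiv> subtopology (constructible_ideals R) (proper_ideals_of R)"
  defines "P0 \<equiv> {I \<in> proper_ideals_of R. krull_dim (R Quot I) = 0}"
  shows "(P0 \<subseteq> topspace Ctop \<and> Ctop closure_of P0 = topspace Ctop) \<and>
         ((\<forall>M. maximalideal M R \<longrightarrow> finite (carrier (R Quot M))) \<longrightarrow>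
           (\<forall>D. D \<subseteq> topspace Ctop \<and> Ctop closure_of D = topspace Ctop \<longrightarrow> P0 \<subseteq> D))"
proof -
  interpret noetherian_cring R using assms(1,2) by (simp add: noetherian_cring_def)
  have top: "topspace Ctop = proper_ideals_of R"
    unfolding Ctop_def topspace_subtopology constructible_topspace
    unfolding proper_ideals_of_def ideals_of_def by blast
  have P0: "P0 = {I \<in> proper_ideals_of R. zero_dim_over R I}"
    unfolding P0_def proper_ideals_of_def using krull_dim_quot_eq_0_iff by blast
  have "Ctop closure_of P0 = topspace Ctop"
    unfolding dense_intersects_open
  proof (intro allI impI)
    fix T assume "openin Ctop T \<and> T \<noteq> {}"
    then obtain U J where "openin (constructible_ideals R) U" "T = U \<inter> proper_ideals_of R" "J \<in> T"
      unfolding Ctop_def openin_subtopology by blast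
    then show "P0 \<inter> T \<noteq> {}" using constructible_open_meets_zero_dim unfolding P0 by blast
  qed
  moreover have "P0 \<subseteq> D"
    if residue: "\<forall>M. maximalideal M R \<longrightarrow> finite (carrier (R Quot M))"
      and dense: "Ctop closure_of D = topspace Ctop" for D
  proof
    fix I assume "I \<in> P0"
    then have I: "ideal I R" "I \<in> proper_ideals_of R" "zero_dim_over R I"
      unfolding P0 proper_ideals_of_def by auto
    have "finite {J. ideal J R \<and> I \<subseteq> J}"
      using zero_dim_ideal_finitely_many_above residue I(1,3) by blast
    then have "openin (constructible_ideals R) {I}" by (rule constructible_open_singleton[OF I(1)])
    then have "openin Ctop {I}" unfolding Ctop_def openin_subtopology using I(2) by blast
    then show "I \<in> D" using dense unfolding dense_intersects_open by blast
  qed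
  moreover have "P0 \<subseteq> topspace Ctop" unfolding top P0 by blast
  ultimately show ?thesis by blast
qed

end
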